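(* Let $\mathcal{OC}_{n,k}$ be the set of OCPs of size $n$ with order $k$. Then $$1+\sum_{n,k\ge1}|\mathcal{OC}_{n,k}|\,t^k\frac{z^n}{n!}=\sqrt{\frac{1-z+zt}{1-z-zt}}.$$
   Context: A cluster is a nonempty word of distinct positive integers. A cluster-cycle of order $k$ is a cycle $(c_1\cdots c_k)$, considered up to cyclic rotation, whose entries $c_i$ are pairwise disjoint clusters. An odd order cluster-permutation (OCP) of size $n$ is a set of cluster-cycles of odd order in which every element of $[n]$ appears exactly once in exactly one cluster. The order of an OCP is the total number of clusters in all its cluster-cycles. *)

theory Defs
  imports "HOL-Analysis.Analysis"
begin

definition cluster :: "nat list \<Rightarrow> bool" where
  "cluster c \<longleftrightarrow> c \<noteq> [] \<and> distinct c \<and> (\<forall>x\<in>set c. 0 < x)"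

text \<open>A cycle considered up to cyclic rotation: the set of all rotations of a word.\<close>
definition rotations :: "'a list \<Rightarrow> 'a list set" where
  "rotations cs = {rotate i cs | i. True}"

definition cluster_cycle :: "nat list list set \<Rightarrow> bool" where
  "cluster_cycle C \<longleftrightarrow> (\<exists>cs. C = rotations cs \<and> (\<forall>c\<in>set cs. cluster c) \<and>
     (\<forall>i<length cs. \<forall>j<length cs. i \<noteq> j \<longrightarrow> set (cs ! i) \<inter> set (cs ! j) = {}))"

definition cyc_rep :: "nat list list set \<Rightarrow> nat list list" where
  "cyc_rep C = (SOME cs. C = rotations cs)"

definition cyc_order :: "nat list list set \<Rightarrow> nat" where
  "cyc_order C = length (cyc_rep C)"

definition OCP :: "nat \<Rightarrow> nat list list set set \<Rightarrow> bool" where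
  "OCP n P \<longleftrightarrow> finite P \<and> (\<forall>C\<in>P. cluster_cycle C \<and> odd (cyc_order C)) \<and>
     (\<forall>x. (\<Sum>C\<in>P. count_list (concat (cyc_rep C)) x) = (if x \<in> {1..n} then 1 else 0))"

definition ocp_order :: "nat list list set set \<Rightarrow> nat" where
  "ocp_order P = (\<Sum>C\<in>P. cyc_order C)"

definition OC :: "nat \<Rightarrow> nat \<Rightarrow> nat list list set set set" where
  "OC n k = {P. OCP n P \<and> ocp_order P = k}"

end

theory Submission
  imports Defs
begin

(* An OCP of order k on [n] is the same as a set of k clusters partitioning [n] together with a
   permutation of these clusters all of whose cycles have odd length. Both kinds of objects are
   assemblies of blocks and are counted by removing the block through a fixed point: clusters give
   the Lah numbers L(n,k) = n!/k! * C(n-1,k-1), and permutations of k objects with only odd cycles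
   are counted by numbers p_k with p_(2m+1) = (2m+1) p_(2m) and p_(2m+2) = (2m+1) p_(2m+1), so that
   p_k/k! is the coefficient of w^(2 floor(k/2)) in (1 - w^2)^(-1/2) and
   sum_k p_k w^k/k! = (1 + w)/sqrt(1 - w^2) = sqrt((1 + w)/(1 - w)).
   Since sum_n C(n-1,k-1) z^n = (z/(1-z))^k, the double series is this generating function at
   w = tz/(1-z), which turns sqrt((1+w)/(1-w)) into sqrt((1-z+zt)/(1-z-zt)). *)

section \<open>Assemblies of blocks\<close>

lemma card_remove_eq_iff: "finite Q \<Longrightarrow> b \<in> Q \<Longrightarrow> card (Q - {b}) = k \<longleftrightarrow> card Q = Suc k"
  by (metis card_Suc_Diff1 nat.inject)

locale block_structure =
  fixes valid :: "'b \<Rightarrow> bool" and support :: "'b \<Rightarrow> 'a set"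
  assumes support_nonempty: "valid b \<Longrightarrow> support b \<noteq> {}"
    and finite_valid_within: "finite A \<Longrightarrow> finite {b. valid b \<and> support b \<subseteq> A}"
begin

definition assemblies :: "'a set \<Rightarrow> 'b set set" where
  "assemblies A =
     {Q. finite Q \<and> (\<forall>b\<in>Q. valid b) \<and> disjoint_family_on support Q \<and> \<Union>(support ` Q) = A}"

definition blocks_at :: "'a \<Rightarrow> 'a set \<Rightarrow> 'b set" where
  "blocks_at a A = {b. valid b \<and> a \<in> support b \<and> support b \<subseteq> A}"

lemma finite_assemblies: "finite A \<Longrightarrow> finite (assemblies A)"
  by (rule finite_subset[of _ "Pow {b. valid b \<and> support b \<subseteq> A}"])
    (auto simp: assemblies_def finite_valid_within)

lemma finite_blocks_at: "finite A \<Longrightarrow> finite (blocks_at a A)"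
  by (rule finite_subset[OF _ finite_valid_within]) (auto simp: blocks_at_def)

lemma assemblies_empty: "assemblies {} = {{}}"
  using support_nonempty by (auto simp: assemblies_def disjoint_family_on_def)

lemma assemblies_card_0: "{Q \<in> assemblies A. card Q = 0} = (if A = {} then {{}} else {})"
proof -
  have "{Q \<in> assemblies A. card Q = 0} = {Q \<in> assemblies A. Q = {}}"
    unfolding assemblies_def by auto
  moreover have "{} \<in> assemblies A \<longleftrightarrow> A = {}"
    unfolding assemblies_def by (auto simp: disjoint_family_on_def)
  ultimately show ?thesis by auto
qed

lemma block_notin_assembly_of_rest:
  assumes "b \<in> blocks_at a A" "R \<in> assemblies (A - support b)"
  shows "b \<notin> R"
  using assms support_nonempty by (auto simp: assemblies_def blocks_at_def)

lemma bij_betw_remove_block: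
  assumes b: "b \<in> blocks_at a A"
  shows "bij_betw (\<lambda>Q. Q - {b}) {Q \<in> assemblies A. b \<in> Q} (assemblies (A - support b))"
proof (rule bij_betw_byWitness[where f'="insert b"])
  show "\<forall>R\<in>assemblies (A - support b). insert b R - {b} = R"
    using block_notin_assembly_of_rest[OF b] by auto
  show "(\<lambda>Q. Q - {b}) ` {Q \<in> assemblies A. b \<in> Q} \<subseteq> assemblies (A - support b)"
  proof clarify
    fix Q assume Q: "Q \<in> assemblies A" "b \<in> Q"
    then have "c \<in> Q \<Longrightarrow> c \<noteq> b \<Longrightarrow> support c \<inter> support b = {}" for c
      unfolding assemblies_def disjoint_family_on_def by blast
    with Q show "Q - {b} \<in> assemblies (A - support b)"
      unfolding assemblies_def disjoint_family_on_def by auto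
  qed
  show "insert b ` assemblies (A - support b) \<subseteq> {Q \<in> assemblies A. b \<in> Q}"
  proof (rule image_subsetI)
    fix R assume R: "R \<in> assemblies (A - support b)"
    then have "c \<in> R \<Longrightarrow> support b \<inter> support c = {}" for c
      by (auto simp: assemblies_def)
    with R b show "insert b R \<in> {Q \<in> assemblies A. b \<in> Q}"
      unfolding assemblies_def blocks_at_def disjoint_family_on_def by (auto simp: Int_commute)
  qed
qed auto

lemma assembly_has_block_at:
  assumes "Q \<in> assemblies A" "a \<in> A"
  obtains b where "b \<in> Q" "b \<in> blocks_at a A"
proof -
  from assms obtain b where "b \<in> Q" "a \<in> support b"
    unfolding assemblies_def by blast
  with assms(1) show thesis
    using that unfolding assemblies_def blocks_at_def by blast
qed

lemma assembly_unique_block_at: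
  assumes "Q \<in> assemblies A" "b \<in> Q" "b' \<in> Q" "b \<in> blocks_at a A" "b' \<in> blocks_at a A"
  shows "b = b'"
  using assms unfolding assemblies_def blocks_at_def disjoint_family_on_def by blast

lemma card_assemblies_split:
  assumes "finite A" "a \<in> A"
  shows "card {Q \<in> assemblies A. P Q} = (\<Sum>b\<in>blocks_at a A. card {Q \<in> assemblies A. b \<in> Q \<and> P Q})"
proof -
  have "{Q \<in> assemblies A. P Q} = (\<Union>b\<in>blocks_at a A. {Q \<in> assemblies A. b \<in> Q \<and> P Q})"
    using assembly_has_block_at[OF _ \<open>a \<in> A\<close>] by blast
  moreover have "{Q \<in> assemblies A. b \<in> Q \<and> P Q} \<inter> {Q \<in> assemblies A. b' \<in> Q \<and> P Q} = {}"
    if "b \<in> blocks_at a A" "b' \<in> blocks_at a A" "b \<noteq> b'" for b b'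
    using that assembly_unique_block_at by blast
  ultimately show ?thesis
    using assms by (simp add: card_UN_disjoint finite_blocks_at finite_assemblies)
qed

lemma card_assemblies_remove_block:
  assumes "finite A" "a \<in> A"
  shows "card (assemblies A) = (\<Sum>b\<in>blocks_at a A. card (assemblies (A - support b)))"
  using card_assemblies_split[OF assms, of "\<lambda>_. True"]
  by (simp add: bij_betw_same_card[OF bij_betw_remove_block])

lemma card_assemblies_remove_block_Suc:
  assumes "finite A" "a \<in> A"
  shows "card {Q \<in> assemblies A. card Q = Suc k} =
    (\<Sum>b\<in>blocks_at a A. card {R \<in> assemblies (A - support b). card R = k})"
proof -
  have "card {Q \<in> assemblies A. b \<in> Q \<and> card Q = Suc k} = card {R \<in> assemblies (A - support b). card R = k}"
    if b: "b \<in> blocks_at a A" for b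
  proof -
    have "bij_betw (\<lambda>Q. Q - {b}) {Q \<in> {Q \<in> assemblies A. b \<in> Q}. card Q = Suc k}
        {R \<in> assemblies (A - support b). card R = k}"
      by (rule bij_betw_Collect[OF bij_betw_remove_block[OF b]])
        (rule card_remove_eq_iff; simp add: assemblies_def)
    from bij_betw_same_card[OF this] show ?thesis
      by (simp only: mem_Collect_eq conj_assoc)
  qed
  then show ?thesis
    using card_assemblies_split[OF assms, of "\<lambda>Q. card Q = Suc k"] by simp
qed

lemma card_blocks_containing:
  assumes "Q \<in> assemblies A"
  shows "card {b \<in> Q. a \<in> support b} = (if a \<in> A then 1 else 0)"
proof (cases "a \<in> A")
  case True
  then obtain b where b: "b \<in> Q" "a \<in> support b"
    using assms unfolding assemblies_def by blast
  with assms have "{b \<in> Q. a \<in> support b} = {b}"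
    unfolding assemblies_def disjoint_family_on_def by blast
  with True show ?thesis by simp
next
  case False
  with assms have "{b \<in> Q. a \<in> support b} = {}"
    unfolding assemblies_def by blast
  then show ?thesis
    using False by (simp only: card.empty if_False)
qed

lemma assemblies_iff_card_blocks_containing:
  "Q \<in> assemblies A \<longleftrightarrow>
    finite Q \<and> (\<forall>b\<in>Q. valid b) \<and> (\<forall>a. card {b \<in> Q. a \<in> support b} = (if a \<in> A then 1 else 0))"
proof (intro iffI conjI)
  assume Q: "finite Q \<and> (\<forall>b\<in>Q. valid b) \<and> (\<forall>a. card {b \<in> Q. a \<in> support b} = (if a \<in> A then 1 else 0))"
  have "b = b'" if "b \<in> Q" "b' \<in> Q" "a \<in> support b" "a \<in> support b'" for a b b'
  proof (rule ccontr)
    assume "b \<noteq> b'"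
    then have "card {b, b'} \<le> card {b \<in> Q. a \<in> support b}"
      using Q that by (intro card_mono) auto
    with \<open>b \<noteq> b'\<close> Q show False by (simp split: if_splits)
  qed
  then have "disjoint_family_on support Q"
    unfolding disjoint_family_on_def by blast
  moreover have "a \<in> \<Union>(support ` Q) \<longleftrightarrow> a \<in> A" for a
  proof -
    have "a \<in> \<Union>(support ` Q) \<longleftrightarrow> card {b \<in> Q. a \<in> support b} \<noteq> 0"
      using Q[THEN conjunct1] by auto
    then show ?thesis
      using Q by simp
  qed
  ultimately show "Q \<in> assemblies A"
    using Q unfolding assemblies_def by blast
qed (auto simp: assemblies_def card_blocks_containing)

end

section \<open>Permutations with only odd cycles\<close>

lemma rotate_in_rotations: "rotate i cs \<in> rotations cs"
  unfolding rotations_def by blast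

lemma self_in_rotations: "cs \<in> rotations cs"
  using rotate_in_rotations[of 0 cs] by simp

lemma rotations_subset: "xs \<in> rotations ys \<Longrightarrow> rotations xs \<subseteq> rotations ys"
  by (auto simp: rotations_def rotate_rotate)

lemma rotations_rotate: "rotations (rotate j cs) = rotations cs"
proof
  show "rotations (rotate j cs) \<subseteq> rotations cs"
    by (rule rotations_subset[OF rotate_in_rotations])
  have "rotate (length cs * j - j) (rotate j cs) = rotate (length cs * j) cs"
    by (cases cs) (simp_all add: rotate_rotate algebra_simps)
  then have "cs = rotate (length cs * j - j) (rotate j cs)"
    by simp
  then show "rotations cs \<subseteq> rotations (rotate j cs)"
    by (metis rotations_subset rotate_in_rotations)
qed

lemma rotations_eqD: "rotations cs = rotations ds \<Longrightarrow> \<exists>i. cs = rotate i ds"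
  using self_in_rotations[of cs] unfolding rotations_def by auto

lemma set_of_rotation: "ys \<in> rotations cs \<Longrightarrow> set ys = set cs"
  unfolding rotations_def by auto

lemma rotate_fixes_hd_distinct:
  assumes "distinct xs" "hd (rotate i xs) = hd xs"
  shows "rotate i xs = xs"
proof (cases "xs = []")
  case False
  then have "xs ! (i mod length xs) = xs ! 0"
    using assms(2) hd_rotate_conv_nth[OF False, of i] hd_conv_nth[OF False] by simp
  with False assms(1) have "i mod length xs = 0"
    by (simp add: nth_eq_iff_index_eq)
  then show ?thesis by simp
qed simp

definition odd_cycle :: "'a list set \<Rightarrow> bool" where
  "odd_cycle C \<longleftrightarrow> (\<exists>cs. C = rotations cs \<and> distinct cs \<and> odd (length cs))"

definition cycle_elems :: "'a list set \<Rightarrow> 'a set" where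
  "cycle_elems C = \<Union>(set ` C)"

lemma cycle_elems_rotations [simp]: "cycle_elems (rotations cs) = set cs"
  using self_in_rotations[of cs] set_of_rotation[of _ cs] unfolding cycle_elems_def by blast

lemma finite_distinct_lists: "finite A \<Longrightarrow> finite {cs. distinct cs \<and> set cs \<subseteq> A}"
  using finite_subset_distinct[of A] by (simp add: conj_commute)

interpretation odd_cycles: block_structure odd_cycle cycle_elems
proof
  show "cycle_elems C \<noteq> {}" if "odd_cycle C" for C :: "'a list set"
    using that by (auto simp: odd_cycle_def)
  show "finite {C. odd_cycle C \<and> cycle_elems C \<subseteq> A}" if "finite A" for A :: "'a set"
  proof (rule finite_surj[OF finite_distinct_lists[OF that]])
    show "{C. odd_cycle C \<and> cycle_elems C \<subseteq> A} \<subseteq> rotations ` {cs. distinct cs \<and> set cs \<subseteq> A}"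
      by (auto simp: odd_cycle_def)
  qed
qed

lemma bij_betw_odd_cycles_at:
  assumes "a \<notin> A"
  shows "bij_betw (\<lambda>ys. rotations (a # ys))
    {ys. distinct ys \<and> set ys \<subseteq> A \<and> even (length ys)} (odd_cycles.blocks_at a (insert a A))"
proof (rule bij_betw_imageI)
  show "inj_on (\<lambda>ys. rotations (a # ys)) {ys. distinct ys \<and> set ys \<subseteq> A \<and> even (length ys)}"
  proof (rule inj_onI)
    fix ys zs assume "ys \<in> {ys. distinct ys \<and> set ys \<subseteq> A \<and> even (length ys)}"
      "zs \<in> {ys. distinct ys \<and> set ys \<subseteq> A \<and> even (length ys)}"
      and eq: "rotations (a # ys) = rotations (a # zs)"
    then have "distinct (a # zs)" using assms by auto
    moreover obtain i where i: "a # ys = rotate i (a # zs)" using rotations_eqD[OF eq] by blast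
    ultimately have "rotate i (a # zs) = a # zs"
      by (intro rotate_fixes_hd_distinct) (simp_all add: i[symmetric])
    then show "ys = zs" using i by simp
  qed
  show "(\<lambda>ys. rotations (a # ys)) ` {ys. distinct ys \<and> set ys \<subseteq> A \<and> even (length ys)} =
      odd_cycles.blocks_at a (insert a A)"
  proof (intro equalityI subsetI)
    fix C assume "C \<in> (\<lambda>ys. rotations (a # ys)) ` {ys. distinct ys \<and> set ys \<subseteq> A \<and> even (length ys)}"
    with assms show "C \<in> odd_cycles.blocks_at a (insert a A)"
      unfolding odd_cycles.blocks_at_def odd_cycle_def by fastforce
  next
    fix C assume "C \<in> odd_cycles.blocks_at a (insert a A)"
    then obtain cs where C: "C = rotations cs" "distinct cs" "odd (length cs)" "a \<in> set cs"
        "set cs \<subseteq> insert a A"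
      unfolding odd_cycles.blocks_at_def odd_cycle_def by auto
    then obtain xs ys where cs: "cs = xs @ a # ys" by (meson split_list)
    have "C = rotations (a # ys @ xs)"
      using C(1) rotations_rotate[of "length xs" cs] by (simp add: cs rotate_append)
    moreover have "ys @ xs \<in> {ys. distinct ys \<and> set ys \<subseteq> A \<and> even (length ys)}"
      using C cs by auto
    ultimately show "C \<in> (\<lambda>ys. rotations (a # ys)) ` {ys. distinct ys \<and> set ys \<subseteq> A \<and> even (length ys)}"
      by blast
  qed
qed

lemma sum_distinct_lists_by_length:
  assumes "finite A"
  shows "(\<Sum>ys\<in>{ys. distinct ys \<and> set ys \<subseteq> A}. f (length ys)) =
    (\<Sum>j\<le>card A. \<Prod>{card A - j + 1..card A} * f j)"
proof -
  let ?L = "{ys. distinct ys \<and> set ys \<subseteq> A}"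
  have "length ` ?L \<subseteq> {..card A}"
    using assms by (auto simp: distinct_card[symmetric] card_mono)
  then have "(\<Sum>ys\<in>?L. f (length ys)) = (\<Sum>j\<le>card A. \<Sum>ys\<in>{ys \<in> ?L. length ys = j}. f (length ys))"
    by (intro sum.group[symmetric] finite_distinct_lists[OF assms] finite_atMost)
  also have "\<dots> = (\<Sum>j\<le>card A. card {ys. length ys = j \<and> distinct ys \<and> set ys \<subseteq> A} * f j)"
    by (intro sum.cong refl) (simp add: conj_commute conj_left_commute)
  also have "\<dots> = (\<Sum>j\<le>card A. \<Prod>{card A - j + 1..card A} * f j)"
    using assms by (simp add: card_lists_distinct_length_eq)
  finally show ?thesis .
qed

text \<open>The number of permutations of an \<open>m\<close>-set all of whose cycles have odd length (OEIS A000246).\<close>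

fun odd_perms :: "nat \<Rightarrow> nat" where
  "odd_perms 0 = 1"
| "odd_perms (Suc 0) = 1"
| "odd_perms (Suc (Suc m)) = odd_perms (Suc m) + m * Suc m * odd_perms m"

lemma odd_perms_Suc_sum:
  "odd_perms (Suc m) = (\<Sum>j\<le>m. \<Prod>{m - j + 1..m} * (if even j then odd_perms (m - j) else 0))"
proof (induction m rule: odd_perms.induct)
  case (3 m)
  have "(\<Sum>j\<le>Suc (Suc m). \<Prod>{Suc (Suc m) - j + 1..Suc (Suc m)} *
        (if even j then odd_perms (Suc (Suc m) - j) else 0))
      = odd_perms (Suc (Suc m)) +
        (\<Sum>i\<le>m. \<Prod>{m - i + 1..Suc (Suc m)} * (if even i then odd_perms (m - i) else 0))"
    by (simp add: sum.atMost_Suc_shift del: sum.atMost_Suc prod.cl_ivl_Suc cong: if_cong)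
  also have "(\<Sum>i\<le>m. \<Prod>{m - i + 1..Suc (Suc m)} * (if even i then odd_perms (m - i) else 0))
      = Suc m * Suc (Suc m) * (\<Sum>i\<le>m. \<Prod>{m - i + 1..m} * (if even i then odd_perms (m - i) else 0))"
    unfolding sum_distrib_left by (intro sum.cong refl) (auto simp: algebra_simps)
  finally show ?case
    using "3" by simp
qed simp_all

lemma sum_odd_cycles_at:
  assumes "a \<notin> A"
  shows "(\<Sum>C\<in>odd_cycles.blocks_at a (insert a A). f (insert a A - cycle_elems C)) =
    (\<Sum>ys\<in>{ys. distinct ys \<and> set ys \<subseteq> A \<and> even (length ys)}. f (A - set ys))"
proof -
  have "(\<Sum>C\<in>odd_cycles.blocks_at a (insert a A). f (insert a A - cycle_elems C)) =
      (\<Sum>ys\<in>{ys. distinct ys \<and> set ys \<subseteq> A \<and> even (length ys)}.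
        f (insert a A - cycle_elems (rotations (a # ys))))"
    by (rule sum.reindex_bij_betw[OF bij_betw_odd_cycles_at[OF assms], symmetric])
  also have "\<dots> = (\<Sum>ys\<in>{ys. distinct ys \<and> set ys \<subseteq> A \<and> even (length ys)}. f (A - set ys))"
    using assms by (intro sum.cong refl arg_cong[where f=f]) auto
  finally show ?thesis .
qed

lemma card_odd_cycle_assemblies:
  "finite A \<Longrightarrow> card (odd_cycles.assemblies A) = odd_perms (card A)"
proof (induction "card A" arbitrary: A rule: less_induct)
  case less
  show ?case
  proof (cases "A = {}")
    case True
    then show ?thesis by (simp add: odd_cycles.assemblies_empty)
  next
    case False
    then obtain a A' where A: "A = insert a A'" "a \<notin> A'"
      by (metis Set.set_insert ex_in_conv)
    have fin: "finite A'" using less.prems A by simp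
    let ?E = "{ys. distinct ys \<and> set ys \<subseteq> A' \<and> even (length ys)}"
    have "card (odd_cycles.assemblies A) = (\<Sum>ys\<in>?E. card (odd_cycles.assemblies (A' - set ys)))"
      using less.prems A odd_cycles.card_assemblies_remove_block[of A a]
        sum_odd_cycles_at[OF A(2), of "\<lambda>X. card (odd_cycles.assemblies X)"]
      by simp
    also have "\<dots> = (\<Sum>ys\<in>?E. odd_perms (card A' - length ys))"
    proof (rule sum.cong[OF refl])
      fix ys assume ys: "ys \<in> ?E"
      then have "card (A' - set ys) = card A' - length ys"
        using fin by (simp add: card_Diff_subset distinct_card)
      with ys fin A show "card (odd_cycles.assemblies (A' - set ys)) = odd_perms (card A' - length ys)"
        using less.hyps[of "A' - set ys"] by (simp add: card_Diff_subset)
    qed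
    also have "\<dots> = (\<Sum>ys\<in>{ys. distinct ys \<and> set ys \<subseteq> A'}.
        if even (length ys) then odd_perms (card A' - length ys) else 0)"
      using finite_distinct_lists[OF fin] by (simp add: sum.If_cases Int_def conj_commute conj_left_commute)
    also have "\<dots> = odd_perms (card A)"
      using A fin sum_distinct_lists_by_length[OF fin, of "\<lambda>j. if even j then odd_perms (card A' - j) else 0"]
      by (simp add: odd_perms_Suc_sum)
    finally show ?thesis .
  qed
qed

section \<open>Sets of clusters and Lah numbers\<close>

interpretation clusters: block_structure "\<lambda>c::'a list. c \<noteq> [] \<and> distinct c" set
proof
  show "finite {c. (c \<noteq> [] \<and> distinct c) \<and> set c \<subseteq> A}" if "finite A" for A :: "'a set"
    by (rule finite_subset[OF _ finite_distinct_lists[OF that]]) auto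
qed simp

lemma bij_betw_clusters_at:
  assumes "b \<notin> B"
  shows "bij_betw (\<lambda>(zs, i). take i zs @ b # drop i zs)
    (SIGMA zs:{zs. distinct zs \<and> set zs \<subseteq> B}. {..length zs}) (clusters.blocks_at b (insert b B))"
proof (rule bij_betw_imageI)
  have notin: "b \<notin> set (take i zs)" "b \<notin> set (drop i zs)" if "set zs \<subseteq> B" for zs i
    using that assms by (auto dest: in_set_takeD in_set_dropD)
  show "inj_on (\<lambda>(zs, i). take i zs @ b # drop i zs)
      (SIGMA zs:{zs. distinct zs \<and> set zs \<subseteq> B}. {..length zs})"
  proof (rule inj_onI, clarsimp)
    fix zs i zs' i'
    assume "set zs \<subseteq> B" "i \<le> length zs" "set zs' \<subseteq> B" "i' \<le> length zs'"
      and eq: "take i zs @ b # drop i zs = take i' zs' @ b # drop i' zs'"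
    then have "take i zs = take i' zs'" "drop i zs = drop i' zs'"
      using notin append_Cons_eq_iff by metis+
    with \<open>i \<le> length zs\<close> \<open>i' \<le> length zs'\<close> show "zs = zs' \<and> i = i'"
      by (metis append_take_drop_id length_take min_absorb2)
  qed
  show "(\<lambda>(zs, i). take i zs @ b # drop i zs) ` (SIGMA zs:{zs. distinct zs \<and> set zs \<subseteq> B}. {..length zs})
      = clusters.blocks_at b (insert b B)"
  proof (intro equalityI subsetI)
    fix c assume "c \<in> (\<lambda>(zs, i). take i zs @ b # drop i zs) `
        (SIGMA zs:{zs. distinct zs \<and> set zs \<subseteq> B}. {..length zs})"
    then obtain zs i where zs: "distinct zs" "set zs \<subseteq> B" and c: "c = take i zs @ b # drop i zs"
      by auto
    moreover have "distinct (take i zs @ drop i zs)" "set (take i zs @ drop i zs) \<subseteq> B"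
      using zs by simp_all
    ultimately show "c \<in> clusters.blocks_at b (insert b B)"
      using notin[OF zs(2)] unfolding clusters.blocks_at_def by (auto simp del: append_take_drop_id)
  next
    fix c assume "c \<in> clusters.blocks_at b (insert b B)"
    then have c: "distinct c" "b \<in> set c" "set c \<subseteq> insert b B"
      unfolding clusters.blocks_at_def by auto
    then obtain xs ys where "c = xs @ b # ys" by (meson split_list)
    with c show "c \<in> (\<lambda>(zs, i). take i zs @ b # drop i zs) `
        (SIGMA zs:{zs. distinct zs \<and> set zs \<subseteq> B}. {..length zs})"
      by (intro image_eqI[where x="(xs @ ys, length xs)"]) auto
  qed
qed

text \<open>The Lah numbers, defined by the recurrence obtained from removing the cluster of a fixed point.\<close>

fun lah :: "nat \<Rightarrow> nat \<Rightarrow> nat" where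
  "lah 0 0 = 1"
| "lah (Suc n) 0 = 0"
| "lah 0 (Suc k) = 0"
| "lah (Suc n) (Suc k) = (\<Sum>j\<le>n. \<Prod>{n - j + 1..n} * ((j + 1) * lah (n - j) k))"

lemma sum_clusters_at:
  fixes f :: "'a set \<Rightarrow> nat"
  assumes "b \<notin> B" "finite B"
  shows "(\<Sum>c\<in>clusters.blocks_at b (insert b B). f (insert b B - set c)) =
    (\<Sum>zs\<in>{zs. distinct zs \<and> set zs \<subseteq> B}. (length zs + 1) * f (B - set zs))"
proof -
  let ?D = "{zs. distinct zs \<and> set zs \<subseteq> B}"
  let ?ins = "\<lambda>(zs, i). take i zs @ b # drop i zs"
  have "(\<Sum>c\<in>clusters.blocks_at b (insert b B). f (insert b B - set c)) =
      (\<Sum>p\<in>(SIGMA zs:?D. {..length zs}). f (insert b B - set (?ins p)))"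
    by (rule sum.reindex_bij_betw[OF bij_betw_clusters_at[OF assms(1)], symmetric])
  also have "\<dots> = (\<Sum>p\<in>(SIGMA zs:?D. {..length zs}). f (B - set (fst p)))"
  proof (rule sum.cong[OF refl])
    fix p assume "p \<in> (SIGMA zs:?D. {..length zs})"
    then obtain zs i where p: "p = (zs, i)" by auto
    have "set (?ins p) = insert b (set zs)"
      unfolding p by (metis append_take_drop_id set_append Un_insert_right list.set(2) case_prod_conv)
    with assms(1) p \<open>p \<in> _\<close> show "f (insert b B - set (?ins p)) = f (B - set (fst p))"
      by (auto intro!: arg_cong[where f=f])
  qed
  also have "\<dots> = (\<Sum>zs\<in>?D. \<Sum>i\<le>length zs. f (B - set zs))"
    using finite_distinct_lists[OF assms(2)] by (subst sum.Sigma) (simp_all add: case_prod_beta)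
  finally show ?thesis by simp
qed

lemma card_cluster_assemblies:
  "finite B \<Longrightarrow> card {Q \<in> clusters.assemblies B. card Q = k} = lah (card B) k"
proof (induction k arbitrary: B)
  case 0
  then show ?case
    by (cases "card B") (auto simp: clusters.assemblies_card_0)
next
  case (Suc k)
  show ?case
  proof (cases "B = {}")
    case True
    then show ?thesis by (simp add: clusters.assemblies_empty)
  next
    case False
    then obtain b B' where B: "B = insert b B'" "b \<notin> B'"
      by (metis Set.set_insert ex_in_conv)
    have fin: "finite B'" using Suc.prems B by simp
    let ?D = "{zs. distinct zs \<and> set zs \<subseteq> B'}"
    have "card {Q \<in> clusters.assemblies B. card Q = Suc k} =
        (\<Sum>zs\<in>?D. (length zs + 1) * card {R \<in> clusters.assemblies (B' - set zs). card R = k})"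
      using Suc.prems B clusters.card_assemblies_remove_block_Suc[of B b k]
        sum_clusters_at[OF B(2) fin, of "\<lambda>X. card {R \<in> clusters.assemblies X. card R = k}"]
      by simp
    also have "\<dots> = (\<Sum>zs\<in>?D. (length zs + 1) * lah (card B' - length zs) k)"
      using fin Suc.IH by (intro sum.cong refl) (simp add: card_Diff_subset distinct_card)
    also have "\<dots> = lah (card B) (Suc k)"
      using B fin sum_distinct_lists_by_length[OF fin, of "\<lambda>j. (j + 1) * lah (card B' - j) k"]
      by simp
    finally show ?thesis .
  qed
qed

section \<open>Odd order cluster-permutations\<close>

lemma cyc_rep_rotations: "rotations (cyc_rep (rotations cs)) = rotations cs"
  unfolding cyc_rep_def by (rule someI[where P="\<lambda>ds. rotations cs = rotations ds", OF refl, symmetric])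

lemma cyc_rep_is_rotation: "\<exists>i. cyc_rep (rotations cs) = rotate i cs"
  using rotations_eqD[OF cyc_rep_rotations] .

lemma count_list_concat_rotate: "count_list (concat (rotate i xss)) x = count_list (concat xss) x"
  by (metis rotate_drop_take append_take_drop_id concat_append count_list_append add.commute)

lemma ocp_cycle_iff:
  fixes C :: "nat list list set"
  shows "cluster_cycle C \<and> odd (cyc_order C) \<and> distinct (concat (cyc_rep C)) \<longleftrightarrow>
    odd_cycle C \<and> (\<forall>c\<in>cycle_elems C. cluster c) \<and> disjoint_family_on set (cycle_elems C)"
proof
  assume C: "cluster_cycle C \<and> odd (cyc_order C) \<and> distinct (concat (cyc_rep C))"
  then obtain cs where cs: "C = rotations cs" "\<forall>c\<in>set cs. cluster c"
    unfolding cluster_cycle_def by blast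
  let ?r = "cyc_rep C"
  obtain i where i: "?r = rotate i cs" using cyc_rep_is_rotation cs(1) by blast
  have "[] \<notin> set ?r" using cs(2) i by (auto simp: cluster_def)
  then have "distinct ?r" "disjoint_family_on set (set ?r)"
    using C by (simp_all add: distinct_concat_iff removeAll_id disjoint_family_on_def)
  moreover have "C = rotations ?r" "odd (length ?r)"
    using C cs(1) cyc_rep_rotations by (simp_all add: cyc_order_def)
  ultimately show "odd_cycle C \<and> (\<forall>c\<in>cycle_elems C. cluster c) \<and> disjoint_family_on set (cycle_elems C)"
    using cs i unfolding odd_cycle_def by auto
next
  assume C: "odd_cycle C \<and> (\<forall>c\<in>cycle_elems C. cluster c) \<and> disjoint_family_on set (cycle_elems C)"
  then obtain cs where cs: "C = rotations cs" "distinct cs" "odd (length cs)"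
    unfolding odd_cycle_def by blast
  obtain i where i: "cyc_rep C = rotate i cs" using cyc_rep_is_rotation cs(1) by blast
  have clusters: "\<forall>c\<in>set cs. cluster c" and disj: "disjoint_family_on set (set cs)"
    using C cs(1) by simp_all
  then have "\<forall>i<length cs. \<forall>j<length cs. i \<noteq> j \<longrightarrow> set (cs ! i) \<inter> set (cs ! j) = {}"
    using cs(2) by (auto simp: disjoint_family_on_def nth_eq_iff_index_eq)
  then have "cluster_cycle C"
    unfolding cluster_cycle_def using cs(1) clusters by blast
  moreover have "distinct (concat (cyc_rep C))"
    using i clusters disj cs(2) by (auto simp: distinct_concat_iff removeAll_id cluster_def disjoint_family_on_def)
  ultimately show "cluster_cycle C \<and> odd (cyc_order C) \<and> distinct (concat (cyc_rep C))"
    using i cs(3) by (simp add: cyc_order_def)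
qed

lemma count_list_distinct: "distinct c \<Longrightarrow> count_list c x = (if x \<in> set c then 1 else 0)"
  by (induction c) auto

lemma distinct_if_count_list_le_1: "(\<And>x. count_list xs x \<le> 1) \<Longrightarrow> distinct xs"
proof (induction xs)
  case (Cons a xs)
  from Cons.prems[of a] have "a \<notin> set xs"
    by (simp add: count_list_0_iff[symmetric])
  moreover have "count_list xs x \<le> 1" for x
    using Cons.prems[of x] by (simp split: if_splits)
  ultimately show ?case using Cons.IH by simp
qed simp

lemma card_filter_Sigma_snd:
  assumes "disjoint_family_on B A"
  shows "card {p \<in> Sigma A B. P (snd p)} = card {b \<in> \<Union>(B ` A). P b}"
proof (rule bij_betw_same_card[of snd])
  show "bij_betw snd {p \<in> Sigma A B. P (snd p)} {b \<in> \<Union>(B ` A). P b}"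
    using assms unfolding bij_betw_def inj_on_def disjoint_family_on_def by force
qed

lemma finite_cycle_elems: "odd_cycle C \<Longrightarrow> finite (cycle_elems C)"
  by (auto simp: odd_cycle_def)

lemma cyc_order_odd_cycle:
  assumes "odd_cycle C"
  shows "cyc_order C = card (cycle_elems C)"
proof -
  obtain cs where cs: "C = rotations cs" "distinct cs"
    using assms unfolding odd_cycle_def by blast
  moreover obtain i where "cyc_rep C = rotate i cs" using cyc_rep_is_rotation cs(1) by blast
  ultimately show ?thesis by (simp add: cyc_order_def distinct_card)
qed

lemma count_concat_cyc_rep:
  assumes "odd_cycle C" "\<forall>c\<in>cycle_elems C. distinct c"
  shows "count_list (concat (cyc_rep C)) x = card {c \<in> cycle_elems C. x \<in> set c}"
proof -
  obtain cs where cs: "C = rotations cs" "distinct cs"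
    using assms(1) unfolding odd_cycle_def by blast
  obtain i where "cyc_rep C = rotate i cs" using cyc_rep_is_rotation cs(1) by blast
  then have "count_list (concat (cyc_rep C)) x = (\<Sum>c\<in>set cs. count_list c x)"
    using cs(2) by (simp add: count_list_concat_rotate count_list_concat sum_list_distinct_conv_sum_set)
  also have "\<dots> = card {c \<in> set cs. x \<in> set c}"
    using assms(2) cs(1) by (simp add: count_list_distinct sum.If_cases Int_def)
  finally show ?thesis using cs(1) by simp
qed

lemma sum_count_concat_cyc_rep:
  assumes "finite P" "\<forall>C\<in>P. odd_cycle C \<and> (\<forall>c\<in>cycle_elems C. distinct c)"
  shows "(\<Sum>C\<in>P. count_list (concat (cyc_rep C)) x) = card {p \<in> Sigma P cycle_elems. x \<in> set (snd p)}"
proof -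
  have "{p \<in> Sigma P cycle_elems. x \<in> set (snd p)} = (SIGMA C:P. {c \<in> cycle_elems C. x \<in> set c})"
    by auto
  then show ?thesis
    using assms by (simp add: card_SigmaI count_concat_cyc_rep finite_cycle_elems)
qed

lemma OC_if_assemblies:
  assumes S: "S \<in> clusters.assemblies {1..n}" "card S = k"
    and P: "P \<in> odd_cycles.assemblies S"
  shows "P \<in> OC n k"
proof -
  have cycles: "odd_cycle C" "cycle_elems C \<subseteq> S" if "C \<in> P" for C
    using P that unfolding odd_cycles.assemblies_def by auto
  have clusters: "cluster c" "distinct c" if "c \<in> S" for c
  proof -
    have "set c \<subseteq> {1..n}" "c \<noteq> []" "distinct c"
      using S(1) that unfolding clusters.assemblies_def by auto
    then show "cluster c" "distinct c" by (auto simp: cluster_def)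
  qed
  have disj_S: "disjoint_family_on set S" and disj_P: "disjoint_family_on cycle_elems P"
    and S_eq: "S = \<Union>(cycle_elems ` P)" and fin_P: "finite P"
    using S(1) P unfolding clusters.assemblies_def odd_cycles.assemblies_def by auto
  have "cluster_cycle C \<and> odd (cyc_order C)" if "C \<in> P" for C
    using ocp_cycle_iff[of C] cycles[OF that] clusters disjoint_family_on_mono[OF _ disj_S]
    by blast
  moreover have "(\<Sum>C\<in>P. count_list (concat (cyc_rep C)) x) = (if x \<in> {1..n} then 1 else 0)" for x
  proof -
    have "(\<Sum>C\<in>P. count_list (concat (cyc_rep C)) x) = card {p \<in> Sigma P cycle_elems. x \<in> set (snd p)}"
      using fin_P cycles clusters by (intro sum_count_concat_cyc_rep) blast+
    also have "\<dots> = card {c \<in> S. x \<in> set c}"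
      unfolding S_eq by (rule card_filter_Sigma_snd[OF disj_P])
    finally show ?thesis
      using clusters.card_blocks_containing[OF S(1)] by simp
  qed
  moreover have "ocp_order P = k"
  proof -
    have "ocp_order P = (\<Sum>C\<in>P. card (cycle_elems C))"
      unfolding ocp_order_def using cycles by (simp add: cyc_order_odd_cycle)
    also have "\<dots> = card S"
      using S_eq fin_P disj_P cycles
      by (simp add: card_UN_disjoint' finite_cycle_elems)
    finally show ?thesis using S(2) by simp
  qed
  ultimately show ?thesis
    unfolding OC_def OCP_def using fin_P by blast
qed

lemma OC_odd_cycles:
  assumes "P \<in> OC n k" "C \<in> P"
  shows "odd_cycle C" "\<forall>c\<in>cycle_elems C. cluster c"
proof -
  have fin: "finite P" and ocp: "cluster_cycle C \<and> odd (cyc_order C)"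
    and count: "\<And>x. (\<Sum>C\<in>P. count_list (concat (cyc_rep C)) x) = (if x \<in> {1..n} then 1 else 0)"
    using assms unfolding OC_def OCP_def by auto
  have "count_list (concat (cyc_rep C)) x \<le> 1" for x
    using member_le_sum[OF assms(2), of "\<lambda>C. count_list (concat (cyc_rep C)) x"] fin count[of x]
    by (simp split: if_splits)
  then have "distinct (concat (cyc_rep C))"
    by (rule distinct_if_count_list_le_1)
  with ocp have "odd_cycle C \<and> (\<forall>c\<in>cycle_elems C. cluster c) \<and> disjoint_family_on set (cycle_elems C)"
    using ocp_cycle_iff[of C] by blast
  then show "odd_cycle C" "\<forall>c\<in>cycle_elems C. cluster c"
    by simp_all
qed

lemma OC_multiplicity:
  assumes "P \<in> OC n k"
  shows "card {p \<in> Sigma P cycle_elems. x \<in> set (snd p)} = (if x \<in> {1..n} then 1 else 0)"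
proof -
  have "finite P" and "(\<Sum>C\<in>P. count_list (concat (cyc_rep C)) x) = (if x \<in> {1..n} then 1 else 0)"
    using assms unfolding OC_def OCP_def by auto
  then show ?thesis
    using sum_count_concat_cyc_rep[of P x] OC_odd_cycles[OF assms] by (simp add: cluster_def)
qed

text \<open>By the multiplicity condition every point lies in exactly one pair \<open>(C, c)\<close> of a cycle
  and one of its clusters; this makes both the cycles and the clusters pairwise disjoint.\<close>

lemma assemblies_if_OC:
  assumes "P \<in> OC n k"
  defines "S \<equiv> \<Union>(cycle_elems ` P)"
  shows "S \<in> clusters.assemblies {1..n}" "card S = k" "P \<in> odd_cycles.assemblies S"
proof -
  have fin_P: "finite P" and order: "ocp_order P = k"
    using assms(1) unfolding OC_def OCP_def by auto
  note cycles = OC_odd_cycles[OF assms(1)] and multiplicity = OC_multiplicity[OF assms(1)]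
  have "card {C \<in> P. c \<in> cycle_elems C} = (if c \<in> S then 1 else 0)" for c
  proof (cases "c \<in> S")
    case True
    then obtain C x where C: "C \<in> P" "c \<in> cycle_elems C" "x \<in> set c"
      using cycles unfolding S_def cluster_def by fastforce
    have "card {C \<in> P. c \<in> cycle_elems C} \<le> card {p \<in> Sigma P cycle_elems. x \<in> set (snd p)}"
      using fin_P cycles C(3) by (intro card_inj_on_le[of "\<lambda>C. (C, c)"]) (auto simp: inj_on_def finite_cycle_elems)
    moreover have "card {C \<in> P. c \<in> cycle_elems C} \<noteq> 0"
      using fin_P C(1,2) by auto
    ultimately show ?thesis
      using True multiplicity[of x] by (simp split: if_splits)
  next
    case False
    then have "{C \<in> P. c \<in> cycle_elems C} = {}"
      unfolding S_def by blast
    then show ?thesis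
      using False by (simp only: card.empty if_False)
  qed
  then show P: "P \<in> odd_cycles.assemblies S"
    using fin_P cycles by (simp add: odd_cycles.assemblies_iff_card_blocks_containing)
  then have disj_P: "disjoint_family_on cycle_elems P"
    by (simp add: odd_cycles.assemblies_def)
  have "finite S"
    unfolding S_def using fin_P cycles by (simp add: finite_cycle_elems)
  moreover have "card {c \<in> S. x \<in> set c} = (if x \<in> {1..n} then 1 else 0)" for x
    unfolding S_def using card_filter_Sigma_snd[OF disj_P, of "\<lambda>c. x \<in> set c"] multiplicity[of x]
    by simp
  ultimately show "S \<in> clusters.assemblies {1..n}"
    using cycles unfolding clusters.assemblies_iff_card_blocks_containing S_def cluster_def by auto
  have "card S = (\<Sum>C\<in>P. card (cycle_elems C))"
    unfolding S_def using fin_P disj_P cycles by (simp add: card_UN_disjoint' finite_cycle_elems)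
  also have "\<dots> = k"
    using order cycles by (simp add: ocp_order_def cyc_order_odd_cycle)
  finally show "card S = k" .
qed

lemma OC_eq_Union_assemblies:
  "OC n k = (\<Union>S\<in>{S \<in> clusters.assemblies {1..n}. card S = k}. odd_cycles.assemblies S)"
proof (intro equalityI subsetI)
  fix P assume "P \<in> OC n k"
  then show "P \<in> (\<Union>S\<in>{S \<in> clusters.assemblies {1..n}. card S = k}. odd_cycles.assemblies S)"
    using assemblies_if_OC[of P n k] by (intro UN_I[of "\<Union>(cycle_elems ` P)"]) simp_all
qed (auto intro: OC_if_assemblies)

lemma card_OC: "card (OC n k) = lah n k * odd_perms k"
proof -
  let ?CS = "{S \<in> clusters.assemblies {1..n}. card S = k}"
  have fin: "finite S" if "S \<in> ?CS" for S
    using that by (simp add: clusters.assemblies_def)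
  have "card (OC n k) = (\<Sum>S\<in>?CS. card (odd_cycles.assemblies S))"
    unfolding OC_eq_Union_assemblies
  proof (rule card_UN_disjoint)
    show "finite ?CS" using clusters.finite_assemblies[of "{1..n}"] by simp
    show "\<forall>S\<in>?CS. finite (odd_cycles.assemblies S)" using fin odd_cycles.finite_assemblies by blast
  qed (auto simp: odd_cycles.assemblies_def)
  also have "\<dots> = (\<Sum>S\<in>?CS. odd_perms k)"
    using fin by (simp add: card_odd_cycle_assemblies)
  also have "\<dots> = lah n k * odd_perms k"
    using card_cluster_assemblies[of "{1..n}" k] by simp
  finally show ?thesis .
qed

lemma prod_mult_fact:
  assumes "j \<le> n"
  shows "\<Prod>{n - j + 1..n} * fact (n - j) = (fact n :: nat)"
proof -
  have "fact n div fact (n - j) = \<Prod>{n - j + 1..n}" by (rule fact_div_fact) simp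
  moreover have "fact (n - j) dvd (fact n :: nat)" by (rule fact_dvd) simp
  ultimately show ?thesis by (metis dvd_div_mult_self)
qed

lemma sum_diff_mult_choose: "(\<Sum>i<n. (n - i) * (i choose k)) = Suc n choose Suc (Suc k)"
proof (induction n)
  case (Suc n)
  have "(\<Sum>i<Suc n. (Suc n - i) * (i choose k)) = (\<Sum>i<Suc n. (n - i) * (i choose k)) + (\<Sum>i\<le>n. i choose k)"
    by (simp add: sum.distrib[symmetric] Suc_diff_le lessThan_Suc_atMost algebra_simps
        del: sum.lessThan_Suc sum.atMost_Suc)
  then show ?case
    using Suc.IH by (simp add: sum_choose_upper)
qed simp

lemma sum_Suc_mult_choose: "(\<Sum>j<n. (j + 1) * (n - 1 - j choose k)) = Suc n choose Suc (Suc k)"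
proof -
  have "(\<Sum>j<n. (j + 1) * (n - 1 - j choose k)) = (\<Sum>j<n. (\<lambda>i. (n - i) * (i choose k)) (n - Suc j))"
    by (intro sum.cong refl) (auto simp: Suc_diff_le)
  also have "\<dots> = (\<Sum>i<n. (n - i) * (i choose k))" by (rule sum.nat_diff_reindex)
  finally show ?thesis by (simp add: sum_diff_mult_choose)
qed

lemma lah_0: "lah m 0 = (if m = 0 then 1 else 0)"
  by (cases m) auto

lemma lah_closed_form: "fact (Suc k) * lah (Suc n) (Suc k) = fact (Suc n) * (n choose k)"
proof (induction k arbitrary: n)
  case 0
  have "lah (Suc n) (Suc 0) = (\<Sum>j\<le>n. if j = n then \<Prod>{n - j + 1..n} * (j + 1) else 0)"
    unfolding lah.simps by (intro sum.cong refl) (auto simp: lah_0)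
  also have "\<dots> = fact (Suc n)"
    by (simp add: fact_prod[where 'a=nat])
  finally show ?case by simp
next
  case (Suc k)
  have summand: "\<Prod>{n - j + 1..n} * ((j + 1) * (fact (Suc k) * lah (n - j) (Suc k)))
      = fact n * ((j + 1) * (n - 1 - j choose k))" if "j < n" for j
  proof -
    from that have "n - j = Suc (n - 1 - j)" by simp
    then have "fact (Suc k) * lah (n - j) (Suc k) = fact (n - j) * (n - 1 - j choose k)"
      using Suc.IH[of "n - 1 - j"] by simp
    then have "\<Prod>{n - j + 1..n} * ((j + 1) * (fact (Suc k) * lah (n - j) (Suc k)))
        = (\<Prod>{n - j + 1..n} * fact (n - j)) * ((j + 1) * (n - 1 - j choose k))"
      by (simp only: mult_ac)
    then show ?thesis
      by (simp only: prod_mult_fact[OF less_imp_le[OF that]])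
  qed
  have "fact (Suc (Suc k)) * lah (Suc n) (Suc (Suc k)) =
      Suc (Suc k) * (\<Sum>j<n. \<Prod>{n - j + 1..n} * ((j + 1) * (fact (Suc k) * lah (n - j) (Suc k))))"
    by (simp add: sum_distrib_left lessThan_Suc_atMost[symmetric] algebra_simps)
  also have "\<dots> = Suc (Suc k) * (\<Sum>j<n. fact n * ((j + 1) * (n - 1 - j choose k)))"
    by (intro arg_cong[where f="\<lambda>s. Suc (Suc k) * s"] sum.cong refl) (rule summand, simp)
  also have "\<dots> = Suc (Suc k) * (fact n * (Suc n choose Suc (Suc k)))"
    by (simp only: sum_distrib_left[symmetric] sum_Suc_mult_choose)
  also have "\<dots> = fact n * ((Suc n choose Suc (Suc k)) * Suc (Suc k))"
    by (simp only: mult_ac)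
  also have "\<dots> = fact n * (Suc n * (n choose Suc k))"
    by (simp only: Suc_times_binomial_eq)
  also have "\<dots> = fact (Suc n) * (n choose Suc k)"
    by (simp add: algebra_simps)
  finally show ?case .
qed

section \<open>Generating functions\<close>

lemma odd_perms_odd_even:
  "odd_perms (Suc (2 * m)) = (2 * m + 1) * odd_perms (2 * m) \<and>
   odd_perms (Suc (Suc (2 * m))) = (2 * m + 1) * odd_perms (Suc (2 * m))"
proof (induction m)
  case (Suc m)
  let ?b = "odd_perms (Suc (2 * m))" and ?c = "odd_perms (Suc (Suc (2 * m)))"
  have "odd_perms (Suc (Suc (Suc (2 * m)))) = ?c + Suc (2 * m) * Suc (Suc (2 * m)) * ?b"
    by (rule odd_perms.simps(3))
  also have "\<dots> = (2 * m + 3) * ?c"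
    using Suc.IH by (simp add: algebra_simps del: odd_perms.simps)
  finally have odd: "odd_perms (Suc (Suc (Suc (2 * m)))) = (2 * m + 3) * ?c" .
  have "odd_perms (Suc (Suc (Suc (Suc (2 * m))))) =
      odd_perms (Suc (Suc (Suc (2 * m)))) + Suc (Suc (2 * m)) * Suc (Suc (Suc (2 * m))) * ?c"
    by (rule odd_perms.simps(3))
  also have "\<dots> = (2 * m + 3) * odd_perms (Suc (Suc (Suc (2 * m))))"
    unfolding odd by (simp add: algebra_simps del: odd_perms.simps)
  finally have "odd_perms (Suc (Suc (Suc (Suc (2 * m))))) = (2 * m + 3) * odd_perms (Suc (Suc (Suc (2 * m))))" .
  with odd show ?case
    by (simp add: algebra_simps del: odd_perms.simps)
qed simp

lemma odd_perms_over_fact_step: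
  assumes "odd_perms (Suc n) = c * odd_perms n"
  shows "real (odd_perms (Suc n)) / fact (Suc n) = real c / real (Suc n) * (real (odd_perms n) / fact n)"
  using assms by (simp add: field_simps)

lemma odd_perms_over_fact: "real (odd_perms k) / fact k = (real (k div 2) - 1/2) gchoose (k div 2)"
proof -
  have "real (odd_perms (2 * m)) / fact (2 * m) = (real m - 1/2) gchoose m \<and>
      real (odd_perms (Suc (2 * m))) / fact (Suc (2 * m)) = (real m - 1/2) gchoose m" for m
  proof (induction m)
    case (Suc m)
    let ?g = "\<lambda>m. (real m - 1/2) gchoose m"
    have "?g (Suc m) = real (2 * m + 1) / real (Suc (Suc (2 * m))) * ?g m"
      using gbinomial_rec[of "real m - 1/2" m] by (simp add: field_simps)
    also have "\<dots> = real (odd_perms (Suc (Suc (2 * m)))) / fact (Suc (Suc (2 * m)))"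
      by (subst odd_perms_over_fact_step[OF conjunct2[OF odd_perms_odd_even[of m]]])
        (simp only: conjunct2[OF Suc.IH])
    finally have even: "real (odd_perms (Suc (Suc (2 * m)))) / fact (Suc (Suc (2 * m))) = ?g (Suc m)" ..
    have "odd_perms (Suc (Suc (Suc (2 * m)))) = (2 * m + 3) * odd_perms (Suc (Suc (2 * m)))"
      using conjunct1[OF odd_perms_odd_even[of "Suc m"]] by (simp add: algebra_simps del: odd_perms.simps)
    then have "real (odd_perms (Suc (Suc (Suc (2 * m))))) / fact (Suc (Suc (Suc (2 * m)))) =
        real (2 * m + 3) / real (Suc (Suc (Suc (2 * m)))) * ?g (Suc m)"
      unfolding even[symmetric] by (rule odd_perms_over_fact_step)
    moreover have "real (2 * m + 3) / real (Suc (Suc (Suc (2 * m)))) = 1"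
      by simp
    moreover have "2 * Suc m = Suc (Suc (2 * m))"
      by simp
    ultimately show ?case
      using even by (simp only: mult_1_left)
  qed simp
  then show ?thesis
    by (cases "even k") (auto elim!: evenE oddE)
qed

lemma gbinomial_minus_half: "((-1/2) gchoose m) = (-1) ^ m * ((real m - 1/2) gchoose m)"
  by (subst gbinomial_negated_upper) simp

lemma inv_sqrt_sums:
  fixes x :: real
  assumes "\<bar>x\<bar> < 1"
  shows "(\<lambda>m. ((real m - 1/2) gchoose m) * x ^ m) sums (1 - x) powr (-1/2)"
proof -
  have "((-1/2) gchoose m) * (-x) ^ m = ((real m - 1/2) gchoose m) * x ^ m" for m
    unfolding gbinomial_minus_half power_minus[of x] by (simp add: mult_ac)
  then show ?thesis
    using gen_binomial_real[of "-x" "-1/2"] assms by simp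
qed

lemma has_sum_even_odd:
  fixes f :: "nat \<Rightarrow> 'a::topological_comm_monoid_add"
  assumes "((\<lambda>m. f (2 * m)) has_sum a) UNIV" "((\<lambda>m. f (Suc (2 * m))) has_sum b) UNIV"
  shows "(f has_sum a + b) UNIV"
proof -
  have "(f has_sum a) (range (\<lambda>m. 2 * m))"
    using assms(1) by (subst has_sum_reindex) (auto simp: inj_on_def o_def)
  moreover have "(f has_sum b) (range (\<lambda>m. Suc (2 * m)))"
    using assms(2) by (subst has_sum_reindex) (auto simp: inj_on_def o_def)
  moreover have "range (\<lambda>m. 2 * m) \<inter> range (\<lambda>m. Suc (2 * m)) = {}"
    by auto presburger
  moreover have "range (\<lambda>m. 2 * m) \<union> range (\<lambda>m. Suc (2 * m)) = UNIV"
    by (auto elim: oddE simp: image_iff) presburger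
  ultimately show ?thesis
    by (metis has_sum_Un_disjoint)
qed

lemma sqrt_one_plus_over_one_minus:
  fixes w :: real
  assumes "\<bar>w\<bar> < 1"
  shows "sqrt ((1 + w) / (1 - w)) = (1 + w) * (1 - w\<^sup>2) powr (-1/2)"
proof -
  have pos: "1 + w > 0" "1 - w > 0" "1 - w\<^sup>2 > 0"
    using assms by (auto simp: abs_square_less_1)
  have "(1 + w) / (1 - w) = (1 + w)\<^sup>2 / (1 - w\<^sup>2)"
    using pos by (simp add: field_simps power2_eq_square)
  then have "sqrt ((1 + w) / (1 - w)) = (1 + w) / sqrt (1 - w\<^sup>2)"
    using pos by (simp add: real_sqrt_divide)
  moreover have "(1 - w\<^sup>2) powr (-1/2) = 1 / sqrt (1 - w\<^sup>2)"
    using pos by (simp add: powr_minus_divide powr_half_sqrt)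
  ultimately show ?thesis by simp
qed

lemma odd_perms_egf:
  fixes w :: real
  assumes "\<bar>w\<bar> < 1"
  shows "((\<lambda>k. real (odd_perms k) / fact k * w ^ k) has_sum sqrt ((1 + w) / (1 - w))) UNIV"
proof -
  let ?A = "(1 - w\<^sup>2) powr (-1/2)"
  have coeff: "real (odd_perms (2 * m)) / fact (2 * m) = (real m - 1/2) gchoose m"
    "real (odd_perms (Suc (2 * m))) / fact (Suc (2 * m)) = (real m - 1/2) gchoose m" for m
    using odd_perms_over_fact[of "2 * m"] odd_perms_over_fact[of "Suc (2 * m)"] by simp_all
  have "\<bar>w\<^sup>2\<bar> < 1" using assms by (simp add: abs_square_less_1)
  then have even: "((\<lambda>m. ((real m - 1/2) gchoose m) * (w\<^sup>2) ^ m) has_sum ?A) UNIV"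
    by (rule sums_nonneg_imp_has_sum[OF inv_sqrt_sums]) (simp add: coeff(1)[symmetric])
  have "((\<lambda>m. real (odd_perms (2 * m)) / fact (2 * m) * w ^ (2 * m)) has_sum ?A) UNIV"
    using even by (simp add: coeff(1) power_mult)
  moreover have "((\<lambda>m. real (odd_perms (Suc (2 * m))) / fact (Suc (2 * m)) * w ^ Suc (2 * m)) has_sum w * ?A) UNIV"
    using has_sum_cmult_right[OF even, of w] unfolding coeff(2) power_Suc power_mult
    by (simp only: mult_ac)
  ultimately have "((\<lambda>k. real (odd_perms k) / fact k * w ^ k) has_sum ?A + w * ?A) UNIV"
    by (rule has_sum_even_odd)
  then show ?thesis
    using sqrt_one_plus_over_one_minus[OF assms] by (simp add: algebra_simps)
qed

lemma odd_perms_egf_pos: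
  fixes w :: real
  assumes "\<bar>w\<bar> < 1"
  shows "((\<lambda>k. real (odd_perms k) / fact k * w ^ k) has_sum sqrt ((1 + w) / (1 - w)) - 1) {1..}"
proof -
  have "{1::nat..} = UNIV - {0}" by auto
  then show ?thesis
    using has_sum_Diff[OF odd_perms_egf[OF assms] has_sum_finite[of "{0}"]] by simp
qed

lemma gbinomial_minus_Suc: "((- real (Suc k)) gchoose j) = (-1) ^ j * real (j + k choose k)"
proof -
  have "((- real (Suc k)) gchoose j) = (-1) ^ j * (real (j + k) gchoose j)"
    by (subst gbinomial_negated_upper) (simp add: algebra_simps)
  also have "real (j + k) gchoose j = real (j + k choose j)"
    by (simp only: binomial_gbinomial)
  also have "j + k choose j = j + k choose k"
    using binomial_symmetric[of j "j + k"] by simp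
  finally show ?thesis .
qed

lemma negative_binomial_sums:
  fixes z :: real
  assumes "\<bar>z\<bar> < 1"
  shows "(\<lambda>j. real (j + k choose k) * z ^ j) sums (1 - z) powr (- real (Suc k))"
proof -
  have "((- real (Suc k)) gchoose j) * (-z) ^ j = real (j + k choose k) * z ^ j" for j
    unfolding gbinomial_minus_Suc power_minus[of z] by (simp add: mult_ac)
  then show ?thesis
    using gen_binomial_real[of "-z" "- real (Suc k)"] assms by simp
qed

lemma shifted_binomial_has_sum:
  fixes z :: real
  assumes "\<bar>z\<bar> < 1"
  shows "((\<lambda>n. real (n - 1 choose k) * z ^ n) has_sum (z / (1 - z)) ^ Suc k) {1..}"
proof -
  have "((\<lambda>j. real (j + k choose k) * z ^ j) has_sum (1 - z) powr (- real (Suc k))) UNIV"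
  proof (rule norm_summable_imp_has_sum[OF _ negative_binomial_sums[OF assms]])
    show "summable (\<lambda>j. norm (real (j + k choose k) * z ^ j))"
      using negative_binomial_sums[of "\<bar>z\<bar>" k] assms by (simp add: sums_iff abs_mult power_abs)
  qed
  moreover have "(1 - z) powr (- real (Suc k)) * z ^ Suc k = (z / (1 - z)) ^ Suc k"
  proof -
    have "(1 - z) powr (- real (Suc k)) = inverse ((1 - z) ^ Suc k)"
      using assms by (simp only: powr_minus powr_realpow diff_gt_0_iff_gt abs_less_iff)
    then show ?thesis
      unfolding power_divide by (simp add: divide_inverse mult.commute)
  qed
  ultimately have "((\<lambda>j. real (j + k choose k) * z ^ (j + Suc k)) has_sum (z / (1 - z)) ^ Suc k) UNIV"
    using has_sum_cmult_left[of _ _ _ "z ^ Suc k"] by (fastforce simp: power_add mult_ac)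
  moreover have "bij_betw (\<lambda>j. j + Suc k) UNIV {Suc k..}"
    by (rule bij_betwI[where g="\<lambda>n. n - Suc k"]) auto
  ultimately have "((\<lambda>n. real (n - 1 choose k) * z ^ n) has_sum (z / (1 - z)) ^ Suc k) {Suc k..}"
    using has_sum_reindex_bij_betw[of "\<lambda>j. j + Suc k" UNIV "{Suc k..}"
        "\<lambda>n. real (n - 1 choose k) * z ^ n" "(z / (1 - z)) ^ Suc k"]
    by (simp del: power_Suc add_Suc_right)
  then show ?thesis
    by (rule has_sum_cong_neutral[THEN iffD1, rotated -1]) auto
qed

lemma card_OC_over_fact:
  assumes "1 \<le> n" "1 \<le> k"
  shows "real (card (OC n k)) / fact n = real (n - 1 choose (k - 1)) * (real (odd_perms k) / fact k)"
proof -
  obtain n' k' where nk: "n = Suc n'" "k = Suc k'"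
    using assms by (metis Suc_pred' less_eq_Suc_le One_nat_def)
  have "fact k * real (lah n k) = fact n * real (n - 1 choose (k - 1))"
    using lah_closed_form[of k' n'] unfolding nk by (metis of_nat_fact of_nat_mult diff_Suc_1)
  then show ?thesis
    by (simp add: card_OC field_simps)
qed

lemma ocp_inner_has_sum:
  fixes z t c :: real
  assumes "\<bar>z\<bar> < 1" "1 \<le> k"
  shows "((\<lambda>n. real (n - 1 choose (k - 1)) * z ^ n * (c * t ^ k)) has_sum c * (t * z / (1 - z)) ^ k) {1..}"
proof -
  have "((\<lambda>n. real (n - 1 choose (k - 1)) * z ^ n * (c * t ^ k)) has_sum (z / (1 - z)) ^ k * (c * t ^ k)) {1..}"
    using has_sum_cmult_left[OF shifted_binomial_has_sum[OF assms(1), of "k - 1"]] assms(2) by simp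
  moreover have "(z / (1 - z)) ^ k * (c * t ^ k) = c * (t * z / (1 - z)) ^ k"
    by (simp add: power_mult_distrib power_divide field_simps)
  ultimately show ?thesis by simp
qed

lemma ocp_double_has_sum:
  fixes z t :: real
  assumes z: "\<bar>z\<bar> < 1" and tz: "\<bar>t\<bar> * \<bar>z\<bar> < 1 - \<bar>z\<bar>"
  defines "w \<equiv> t * z / (1 - z)"
  shows "((\<lambda>(k, n). real (n - 1 choose (k - 1)) * z ^ n * (real (odd_perms k) / fact k * t ^ k))
    has_sum sqrt ((1 + w) / (1 - w)) - 1) (Sigma {1..} (\<lambda>_. {1..}))"
proof -
  define g where "g = (\<lambda>(k, n). real (n - 1 choose (k - 1)) * z ^ n * (real (odd_perms k) / fact k * t ^ k))"
  define wa where "wa = \<bar>t\<bar> * \<bar>z\<bar> / (1 - \<bar>z\<bar>)"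
  have wa: "0 \<le> wa" "wa < 1" "\<bar>w\<bar> \<le> wa"
    using z tz unfolding wa_def w_def
    by (auto simp: abs_mult abs_divide intro!: frac_le)
  have "(\<lambda>p. norm (g p)) summable_on Sigma {1..} (\<lambda>_. {1..})"
  proof (rule summable_on_SigmaI)
    show "((\<lambda>n. norm (g (k, n))) has_sum real (odd_perms k) / fact k * wa ^ k) {1..}" if "k \<in> {1..}" for k
      using ocp_inner_has_sum[of "\<bar>z\<bar>" k "real (odd_perms k) / fact k" "\<bar>t\<bar>"] z that
      unfolding g_def wa_def by (simp add: abs_mult power_abs)
    show "(\<lambda>k. real (odd_perms k) / fact k * wa ^ k) summable_on {1..}"
      using odd_perms_egf_pos[of wa] wa by (auto intro: has_sum_imp_summable)
  qed simp
  then have summable: "g summable_on Sigma {1..} (\<lambda>_. {1..})"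
    by (rule abs_summable_summable)
  have inner: "((\<lambda>n. g (k, n)) has_sum real (odd_perms k) / fact k * w ^ k) {1..}" if "k \<in> {1..}" for k
    using ocp_inner_has_sum[OF z, of k "real (odd_perms k) / fact k" t] that unfolding g_def w_def by simp
  have "\<bar>w\<bar> < 1" using wa by simp
  from has_sum_SigmaI[OF inner odd_perms_egf_pos[OF this] summable]
  have "(g has_sum sqrt ((1 + w) / (1 - w)) - 1) (Sigma {1..} (\<lambda>_. {1..}))" .
  then show ?thesis
    unfolding g_def .
qed

lemma ocp_egf_has_sum:
  fixes z t :: real
  assumes z: "\<bar>z\<bar> < 1" and tz: "\<bar>t\<bar> * \<bar>z\<bar> < 1 - \<bar>z\<bar>"
  shows "((\<lambda>(n, k). real (card (OC n k)) * t ^ k * z ^ n / fact n)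
    has_sum (sqrt ((1 - z + z * t) / (1 - z - z * t)) - 1)) ({1..} \<times> {1..})"
proof -
  have "1 - z \<noteq> 0" using z by auto
  then have "1 + t * z / (1 - z) = (1 - z + z * t) / (1 - z)" "1 - t * z / (1 - z) = (1 - z - z * t) / (1 - z)"
    by (simp_all add: field_simps)
  with \<open>1 - z \<noteq> 0\<close> have "(1 + t * z / (1 - z)) / (1 - t * z / (1 - z)) = (1 - z + z * t) / (1 - z - z * t)"
    by simp
  with ocp_double_has_sum[OF z tz]
  have "((\<lambda>(k, n). real (n - 1 choose (k - 1)) * z ^ n * (real (odd_perms k) / fact k * t ^ k))
      has_sum sqrt ((1 - z + z * t) / (1 - z - z * t)) - 1) ({1..} \<times> {1..})"
    by simp
  then have "((\<lambda>(n, k). real (n - 1 choose (k - 1)) * z ^ n * (real (odd_perms k) / fact k * t ^ k))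
      has_sum sqrt ((1 - z + z * t) / (1 - z - z * t)) - 1) ({1..} \<times> {1..})"
    by (subst has_sum_swap) simp
  moreover have "real (card (OC n k)) * t ^ k * z ^ n / fact n =
      real (n - 1 choose (k - 1)) * z ^ n * (real (odd_perms k) / fact k * t ^ k)"
    if "(n, k) \<in> {1..} \<times> {1..}" for n k
  proof -
    have "real (card (OC n k)) * t ^ k * z ^ n / fact n = real (card (OC n k)) / fact n * (t ^ k * z ^ n)"
      by (simp add: field_simps)
    with that show ?thesis
      by (simp add: card_OC_over_fact mult_ac)
  qed
  ultimately show ?thesis
    by (subst has_sum_cong) auto
qed

theorem mainTheorem6:
  shows "\<exists>\<epsilon>>0. \<forall>z t :: real. \<bar>z\<bar> < \<epsilon> \<and> \<bar>t\<bar> < \<epsilon> \<longrightarrow>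
     ((\<lambda>(n, k). real (card (OC n k)) * t ^ k * z ^ n / fact n)
        has_sum (sqrt ((1 - z + z * t) / (1 - z - z * t)) - 1)) ({1..} \<times> {1..})"
proof (intro exI[of _ "1/3"] conjI allI impI)
  fix z t :: real
  assume small: "\<bar>z\<bar> < 1/3 \<and> \<bar>t\<bar> < 1/3"
  have "\<bar>t\<bar> * \<bar>z\<bar> \<le> 1/3 * (1/3)"
    using small by (intro mult_mono) auto
  with small have "\<bar>z\<bar> < 1" "\<bar>t\<bar> * \<bar>z\<bar> < 1 - \<bar>z\<bar>"
    by linarith+
  then show "((\<lambda>(n, k). real (card (OC n k)) * t ^ k * z ^ n / fact n)
      has_sum (sqrt ((1 - z + z * t) / (1 - z - z * t)) - 1)) ({1..} \<times> {1..})"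
    by (rule ocp_egf_has_sum)
qed simp

end
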